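(* Let $\gamma>0$, $n\ge2$, and let $\mu$ be a distribution on $\mathbb{R}$ with $\bar\mu(x)>0$ for all $x\in\mathbb{R}$. For $A>0$ define $$J_1(x)=\int_{(-\infty,A]}\bar\mu(x-u)\,\mu^{(n-1)*}(du),$$ $$J_2(x)=\int_{(A,\,x-A]}\bar\mu(x-u)\,\mu^{(n-1)*}(du)+\bar\mu(A)\,\overline{\mu^{(n-1)*}}(x-A),$$ $$J_3(x)=\int_{(A,\,x-A]}\bar\mu(x-u)\,\mu(du)+\bar\mu(A)\,\bar\mu(x-A),$$ $$\varepsilon(A)=\limsup_{x\to\infty}\frac{J_2(x)+J_3(x)}{\overline{\mu^{n*}}(x)}.$$ (i) For every $A>0$ and every $x>nA$, $$\overline{\mu^{n*}}(x)\le nJ_1(x)+nJ_2(x)$$ and $$nJ_1(x)-\tfrac12n(n-3)J_2(x)-\tfrac12n(n-1)J_3(x)\le\overline{\mu^{n*}}(x).$$ (ii) If $\mu^{n*}\in\mathcal{S}(\gamma)$, then $\lim_{A\to\infty}\varepsilon(A)=0$, and consequently $$\lim_{A\to\infty}\liminf_{x\to\infty}\frac{nJ_1(x)}{\overline{\mu^{n*}}(x)}=\lim_{A\to\infty}\limsup_{x\to\infty}\frac{nJ_1(x)}{\overline{\mu^{n*}}(x)}=1.$$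
   Context: For a probability distribution $\rho$ on $\mathbb{R}$: $\bar\rho(x):=\rho((x,\infty))$, $\rho^{n*}$ is the $n$-th convolution power ($\rho^{1*}=\rho$), $\widehat\rho(\gamma):=\int e^{\gamma x}\rho(dx)$. $f\sim g$ means $f(x)/g(x)\to1$ as $x\to\infty$. For $\gamma\ge0$: $\rho\in\mathcal{L}(\gamma)$ if $\bar\rho(x)>0$ for all $x$ and $\bar\rho(x+a)\sim e^{-\gamma a}\bar\rho(x)$ for every $a\in\mathbb{R}$; $\rho\in\mathcal{S}(\gamma)$ if $\rho\in\mathcal{L}(\gamma)$, $\widehat\rho(\gamma)<\infty$ and $\overline{\rho^{2*}}(x)\sim2\widehat\rho(\gamma)\bar\rho(x)$. *)

theory Defs
  imports "HOL-Probability.Probability" "HOL-Probability.Convolution"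
begin

definition real_distribution :: "real measure \<Rightarrow> bool" where
  "real_distribution \<rho> \<longleftrightarrow> prob_space \<rho> \<and> sets \<rho> = sets borel"

definition tail :: "real measure \<Rightarrow> real \<Rightarrow> real" where
  "tail \<rho> x = measure \<rho> {x<..}"

text \<open>n-th convolution power, with rho^{1*} = rho (index 0 is an unused dummy).\<close>
fun conv_pow :: "real measure \<Rightarrow> nat \<Rightarrow> real measure" where
  "conv_pow \<rho> 0 = return borel 0"
| "conv_pow \<rho> (Suc 0) = \<rho>"
| "conv_pow \<rho> (Suc (Suc n)) = convolution \<rho> (conv_pow \<rho> (Suc n))"

definition mgf :: "real measure \<Rightarrow> real \<Rightarrow> ennreal" where
  "mgf \<rho> \<gamma> = (\<integral>\<^sup>+ x. ennreal (exp (\<gamma> * x)) \<partial>\<rho>)"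

definition class_L :: "real \<Rightarrow> real measure \<Rightarrow> bool" where
  "class_L \<gamma> \<rho> \<longleftrightarrow> (\<forall>x. tail \<rho> x > 0) \<and>
     (\<forall>a. ((\<lambda>x. tail \<rho> (x + a) / tail \<rho> x) \<longlongrightarrow> exp (- \<gamma> * a)) at_top)"

definition class_S :: "real \<Rightarrow> real measure \<Rightarrow> bool" where
  "class_S \<gamma> \<rho> \<longleftrightarrow> class_L \<gamma> \<rho> \<and> mgf \<rho> \<gamma> < \<infinity> \<and>
     ((\<lambda>x. tail (conv_pow \<rho> 2) x / tail \<rho> x) \<longlongrightarrow> 2 * enn2real (mgf \<rho> \<gamma>)) at_top"

definition J1 :: "real measure \<Rightarrow> nat \<Rightarrow> real \<Rightarrow> real \<Rightarrow> real" where
  "J1 \<mu> n A x = (LINT u:{..A}|conv_pow \<mu> (n - 1). tail \<mu> (x - u))"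

definition J2 :: "real measure \<Rightarrow> nat \<Rightarrow> real \<Rightarrow> real \<Rightarrow> real" where
  "J2 \<mu> n A x = (LINT u:{A<..x - A}|conv_pow \<mu> (n - 1). tail \<mu> (x - u))
      + tail \<mu> A * tail (conv_pow \<mu> (n - 1)) (x - A)"

definition J3 :: "real measure \<Rightarrow> real \<Rightarrow> real \<Rightarrow> real" where
  "J3 \<mu> A x = (LINT u:{A<..x - A}|\<mu>. tail \<mu> (x - u)) + tail \<mu> A * tail \<mu> (x - A)"

definition eps :: "real measure \<Rightarrow> nat \<Rightarrow> real \<Rightarrow> ereal" where
  "eps \<mu> n A = Limsup at_top (\<lambda>x. ereal ((J2 \<mu> n A x + J3 \<mu> A x) / tail (conv_pow \<mu> n) x))"

end

theory Submission
  imports Defs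
begin

text \<open>
  Let \<open>X\<^sub>1, \<dots>, X\<^sub>n\<close> be independent with law \<open>\<mu>\<close>, \<open>S = X\<^sub>1 + \<dots> + X\<^sub>n\<close> and
  \<open>R\<^sub>i = S - X\<^sub>i\<close>. Then \<open>J1\<close> and \<open>J2\<close> are the probabilities that \<open>(X\<^sub>i, R\<^sub>i)\<close> lies in
  \<open>{r \<le> A, t + r > x}\<close> resp. \<open>{t > A, r > A, t + r > x}\<close>, and \<open>J3\<close> is the probability that
  \<open>(X\<^sub>i, X\<^sub>j)\<close>, \<open>i \<noteq> j\<close>, lies in the second region. If \<open>S > x > n A\<close>, some \<open>X\<^sub>i\<close> exceeds
  \<open>A\<close> and then \<open>(X\<^sub>i, R\<^sub>i)\<close> lies in one of the two regions; if several indices do, the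
  smallest of them forms with every other one a pair \<open>(X\<^sub>i, X\<^sub>j)\<close> or \<open>(X\<^sub>i, R\<^sub>i)\<close> in the
  second region. Taking expectations of these two counting inequalities gives (i).

  For (ii) let \<open>\<rho> = conv_pow \<mu> n\<close>. The tail of \<open>\<rho> \<star> \<rho>\<close> at \<open>x\<close> is the \<open>\<rho> \<otimes> \<rho>\<close>-mass of the
  second region plus twice the \<open>\<rho>\<close>-integral of \<open>tail \<rho> (x - u)\<close> over \<open>u \<le> A\<close>; by the long-tail
  property that integral is asymptotic to \<open>tail \<rho> x\<close> times the integral of \<open>exp (\<gamma> u)\<close> over
  \<open>u \<le> A\<close>, which tends to \<open>mgf \<rho> \<gamma>\<close> as \<open>A \<rightarrow> \<infinity>\<close>. So subexponentiality makes the mass of the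
  second region \<open>o(tail \<rho> x)\<close>, uniformly for large \<open>A\<close>. Adding to both coordinates independent
  summands exceeding \<open>-B\<close> turns the laws behind \<open>J2\<close> and \<open>J3\<close> into \<open>\<rho> \<otimes> \<rho>\<close> while moving the
  region only by \<open>B\<close>, so \<open>J2 + J3 = o(tail \<rho> x)\<close> as well, and the bounds (i) force
  \<open>n J1 / tail \<rho> x \<rightarrow> 1\<close>.
\<close>

lemma real_distribution_prob_space: "real_distribution \<rho> \<Longrightarrow> prob_space \<rho>"
  by (simp add: real_distribution_def)

lemma sets_real_distribution: "real_distribution \<rho> \<Longrightarrow> sets \<rho> = sets borel"
  by (simp add: real_distribution_def)

lemma space_real_distribution: "real_distribution \<rho> \<Longrightarrow> space \<rho> = UNIV"
  using sets_eq_imp_space_eq[OF sets_real_distribution] by simp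

lemma real_distribution_finite_measure: "real_distribution \<rho> \<Longrightarrow> finite_measure \<rho>"
  by (simp add: real_distribution_def prob_space_def)

lemma sets_pair_real_distribution:
  "real_distribution \<alpha> \<Longrightarrow> real_distribution \<beta> \<Longrightarrow> sets (\<alpha> \<Otimes>\<^sub>M \<beta>) = sets (borel \<Otimes>\<^sub>M borel)"
  by (intro sets_pair_measure_cong) (simp_all add: sets_real_distribution)

lemma pair_prob_space_real_distribution:
  "real_distribution \<alpha> \<Longrightarrow> real_distribution \<beta> \<Longrightarrow> pair_prob_space \<alpha> \<beta>"
  by (simp add: pair_prob_space_def pair_sigma_finite_def real_distribution_prob_space
      prob_space_imp_sigma_finite)

lemma prob_space_pair_real_distribution:
  "real_distribution \<alpha> \<Longrightarrow> real_distribution \<beta> \<Longrightarrow> prob_space (\<alpha> \<Otimes>\<^sub>M \<beta>)"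
  by (intro prob_space_pair) (simp_all add: real_distribution_prob_space)

lemma real_distribution_convolution:
  assumes "real_distribution \<alpha>" "real_distribution \<beta>"
  shows "real_distribution (convolution \<alpha> \<beta>)"
proof -
  interpret pair_prob_space \<alpha> \<beta> using assms by (rule pair_prob_space_real_distribution)
  have [measurable_cong]: "sets \<alpha> = sets borel" "sets \<beta> = sets borel"
    using assms by (simp_all add: sets_real_distribution)
  have "prob_space (distr (\<alpha> \<Otimes>\<^sub>M \<beta>) borel (\<lambda>(x, y). x + y))"
    by (rule prob_space_distr) measurable
  then show ?thesis by (simp add: real_distribution_def convolution_def)
qed

lemma conv_pow_Suc: "1 \<le> k \<Longrightarrow> conv_pow \<rho> (Suc k) = convolution \<rho> (conv_pow \<rho> k)"
  by (cases k) auto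

lemma conv_pow_eq_convolution: "2 \<le> n \<Longrightarrow> conv_pow \<mu> n = convolution \<mu> (conv_pow \<mu> (n - 1))"
  using conv_pow_Suc[of "n - 1" \<mu>] by (simp add: Suc_diff_1)

lemma real_distribution_conv_pow:
  "real_distribution \<rho> \<Longrightarrow> 1 \<le> k \<Longrightarrow> real_distribution (conv_pow \<rho> k)"
  by (induction k) (auto simp: conv_pow_Suc real_distribution_convolution le_Suc_eq)

lemma tail_nonneg: "0 \<le> tail \<rho> x"
  by (simp add: tail_def)

lemma tail_le_1: "real_distribution \<rho> \<Longrightarrow> tail \<rho> x \<le> 1"
  by (simp add: tail_def prob_space.prob_le_1 real_distribution_prob_space)

lemma tail_antimono:
  assumes "real_distribution \<rho>" "x \<le> y"
  shows "tail \<rho> y \<le> tail \<rho> x"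
proof -
  interpret prob_space \<rho> using assms(1) by (rule real_distribution_prob_space)
  show ?thesis
    unfolding tail_def using assms by (intro finite_measure_mono) (auto simp: sets_real_distribution)
qed

lemma borel_measurable_tail[measurable]:
  assumes "real_distribution \<rho>"
  shows "tail \<rho> \<in> borel_measurable borel"
proof -
  have "mono (\<lambda>x. - tail \<rho> x)"
    by (auto simp: mono_def intro: tail_antimono[OF assms])
  then have "(\<lambda>x. - (- tail \<rho> x)) \<in> borel_measurable borel"
    by (intro borel_measurable_uminus borel_measurable_mono)
  then show ?thesis by simp
qed

lemma tail_eq_1_minus_cdf:
  assumes rd: "real_distribution \<rho>"
  shows "tail \<rho> x = 1 - cdf \<rho> x"
proof -
  interpret prob_space \<rho> using rd by (rule real_distribution_prob_space)
  have "{x<..} = space \<rho> - {..x}" using space_real_distribution[OF rd] by auto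
  then show ?thesis
    using rd by (simp add: tail_def cdf_def prob_compl sets_real_distribution)
qed

lemma eventually_tail_pos_at_bot:
  assumes "real_distribution \<rho>"
  shows "\<forall>\<^sub>F y in at_bot. 0 < tail \<rho> y"
proof -
  interpret finite_borel_measure \<rho>
    using assms by (simp add: finite_borel_measure_def finite_borel_measure_axioms_def
        real_distribution_finite_measure sets_real_distribution)
  have "((\<lambda>y. tail \<rho> y) \<longlongrightarrow> 1 - 0) at_bot"
    unfolding tail_eq_1_minus_cdf[OF assms] by (intro tendsto_diff tendsto_const cdf_lim_at_bot)
  then show ?thesis
    by (rule order_tendstoD) simp
qed

section \<open>Two regions of the plane\<close>

definition small_rest_region :: "real \<Rightarrow> real \<Rightarrow> (real \<times> real) set" where
  "small_rest_region A x = {(t, r). r \<le> A \<and> x < t + r}"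

definition both_large_region :: "real \<Rightarrow> real \<Rightarrow> (real \<times> real) set" where
  "both_large_region A x = {(t, r). A < t \<and> A < r \<and> x < t + r}"

lemma small_rest_region_sets[measurable]: "small_rest_region A x \<in> sets (borel \<Otimes>\<^sub>M borel)"
proof -
  have "small_rest_region A x = {z \<in> space (borel \<Otimes>\<^sub>M borel). snd z \<le> A \<and> x < fst z + snd z}"
    by (auto simp: small_rest_region_def space_pair_measure)
  then show ?thesis by simp
qed

lemma both_large_region_sets[measurable]: "both_large_region A x \<in> sets (borel \<Otimes>\<^sub>M borel)"
proof -
  have "both_large_region A x
      = {z \<in> space (borel \<Otimes>\<^sub>M borel). A < fst z \<and> A < snd z \<and> x < fst z + snd z}"
    by (auto simp: both_large_region_def space_pair_measure)
  then show ?thesis by simp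
qed

lemma measure_pair_real_distribution:
  assumes \<alpha>: "real_distribution \<alpha>" and \<beta>: "real_distribution \<beta>"
    and S: "S \<in> sets (borel \<Otimes>\<^sub>M borel)"
  shows "measure (\<alpha> \<Otimes>\<^sub>M \<beta>) S = (\<integral>u. measure \<alpha> {t. (t, u) \<in> S} \<partial>\<beta>)"
proof -
  interpret pair_prob_space \<alpha> \<beta> using \<alpha> \<beta> by (rule pair_prob_space_real_distribution)
  have S': "S \<in> sets (\<alpha> \<Otimes>\<^sub>M \<beta>)" using S sets_pair_real_distribution[OF \<alpha> \<beta>] by simp
  have int: "integrable (\<alpha> \<Otimes>\<^sub>M \<beta>) (\<lambda>(t, u). indicator S (t, u) :: real)"
    using S' by (simp add: case_prod_beta' less_top[symmetric])
  have "measure (\<alpha> \<Otimes>\<^sub>M \<beta>) S = (\<integral>z. indicator S z \<partial>(\<alpha> \<Otimes>\<^sub>M \<beta>))"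
    using S' by simp
  also have "\<dots> = (\<integral>u. \<integral>t. indicator S (t, u) \<partial>\<alpha> \<partial>\<beta>)"
    using integral_snd[OF int] by (simp add: case_prod_beta')
  also have "\<dots> = (\<integral>u. measure \<alpha> {t. (t, u) \<in> S} \<partial>\<beta>)"
  proof (rule Bochner_Integration.integral_cong[OF refl])
    fix u
    have "{t. (t, u) \<in> S} \<in> sets \<alpha>"
      using sets_Pair2[OF S', of u] by (simp add: vimage_def)
    moreover have "indicator S (t, u) = (indicator {t. (t, u) \<in> S} t :: real)" for t
      by (simp add: indicator_def)
    ultimately show "(\<integral>t. indicator S (t, u) \<partial>\<alpha>) = measure \<alpha> {t. (t, u) \<in> S}"
      by simp
  qed
  finally show ?thesis .
qed

lemma integrable_bounded_real_distribution:
  fixes f :: "real \<Rightarrow> real"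
  assumes "real_distribution \<nu>" "f \<in> borel_measurable borel" "\<And>u. \<bar>f u\<bar> \<le> B"
  shows "integrable \<nu> f"
proof -
  interpret prob_space \<nu> using assms(1) by (rule real_distribution_prob_space)
  have [measurable_cong]: "sets \<nu> = sets borel" using assms(1) by (rule sets_real_distribution)
  show ?thesis
    using assms(2,3) by (intro integrable_const_bound[where B = B]) auto
qed

lemma measure_small_rest_region:
  assumes \<alpha>: "real_distribution \<alpha>" and \<beta>: "real_distribution \<beta>"
  shows "measure (\<alpha> \<Otimes>\<^sub>M \<beta>) (small_rest_region A x) = (LINT u:{..A}|\<beta>. tail \<alpha> (x - u))"
proof -
  have "measure \<alpha> {t. (t, u) \<in> small_rest_region A x} = indicator {..A} u *\<^sub>R tail \<alpha> (x - u)" for u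
    by (auto simp: small_rest_region_def tail_def indicator_def algebra_simps
        intro!: arg_cong[where f = "measure \<alpha>"])
  then show ?thesis
    by (simp add: measure_pair_real_distribution[OF \<alpha> \<beta>] set_lebesgue_integral_def)
qed

lemma measure_both_large_region:
  assumes \<alpha>: "real_distribution \<alpha>" and \<beta>: "real_distribution \<beta>" and "2 * A \<le> x"
  shows "measure (\<alpha> \<Otimes>\<^sub>M \<beta>) (both_large_region A x)
           = (LINT u:{A<..x - A}|\<beta>. tail \<alpha> (x - u)) + tail \<alpha> A * tail \<beta> (x - A)"
proof -
  have section_eq: "measure \<alpha> {t. (t, u) \<in> both_large_region A x}
      = indicator {A<..x - A} u * tail \<alpha> (x - u) + tail \<alpha> A * indicator {x - A<..} u" for u
  proof -
    have "{t. (t, u) \<in> both_large_region A x}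
        = (if u \<in> {A<..x - A} then {x - u<..} else if x - A < u then {A<..} else {})"
      using assms(3) by (auto simp: both_large_region_def)
    then show ?thesis by (auto simp: tail_def indicator_def)
  qed
  have tail_bounded: "\<bar>tail \<rho> y\<bar> \<le> 1" if "real_distribution \<rho>" for \<rho> y
    using tail_le_1[OF that] tail_nonneg[of \<rho> y] by simp
  have "measure (\<alpha> \<Otimes>\<^sub>M \<beta>) (both_large_region A x)
      = (\<integral>u. indicator {A<..x - A} u * tail \<alpha> (x - u) \<partial>\<beta>) + (\<integral>u. tail \<alpha> A * indicator {x - A<..} u \<partial>\<beta>)"
    unfolding measure_pair_real_distribution[OF \<alpha> \<beta> both_large_region_sets] section_eq
    using \<alpha> tail_bounded[OF \<alpha>]
    by (intro Bochner_Integration.integral_add integrable_bounded_real_distribution[OF \<beta>, where B = 1])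
       (auto simp: indicator_def)
  also have "\<dots> = (LINT u:{A<..x - A}|\<beta>. tail \<alpha> (x - u)) + tail \<alpha> A * tail \<beta> (x - A)"
    using space_real_distribution[OF \<beta>] by (simp add: set_lebesgue_integral_def tail_def)
  finally show ?thesis .
qed

lemma J1_eq_measure:
  "real_distribution \<mu> \<Longrightarrow> 2 \<le> n \<Longrightarrow>
     J1 \<mu> n A x = measure (\<mu> \<Otimes>\<^sub>M conv_pow \<mu> (n - 1)) (small_rest_region A x)"
  unfolding J1_def by (rule measure_small_rest_region[symmetric]) (auto intro: real_distribution_conv_pow)

lemma J2_eq_measure:
  "real_distribution \<mu> \<Longrightarrow> 2 \<le> n \<Longrightarrow> 2 * A \<le> x \<Longrightarrow>
     J2 \<mu> n A x = measure (\<mu> \<Otimes>\<^sub>M conv_pow \<mu> (n - 1)) (both_large_region A x)"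
  unfolding J2_def by (rule measure_both_large_region[symmetric]) (auto intro: real_distribution_conv_pow)

lemma J3_eq_measure:
  "real_distribution \<mu> \<Longrightarrow> 2 * A \<le> x \<Longrightarrow> J3 \<mu> A x = measure (\<mu> \<Otimes>\<^sub>M \<mu>) (both_large_region A x)"
  unfolding J3_def by (rule measure_both_large_region[symmetric]) auto

lemma small_rest_both_large_disjoint: "small_rest_region A x \<inter> both_large_region A x = {}"
  by (auto simp: small_rest_region_def both_large_region_def)

section \<open>Counting inequalities for real vectors\<close>

lemma indicator_sum_exceeds_le_count:
  fixes w :: "nat \<Rightarrow> real"
  assumes "real n * A < x"
  shows "indicator {x<..} (\<Sum>i<n. w i)
    \<le> (\<Sum>i<n. indicator (small_rest_region A x \<union> both_large_region A x) (w i, \<Sum>j\<in>{..<n}-{i}. w j) :: real)"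
proof (cases "x < (\<Sum>i<n. w i)")
  case True
  have "\<exists>i<n. A < w i"
  proof (rule ccontr)
    assume "\<not> (\<exists>i<n. A < w i)"
    then have "\<And>i. i \<in> {..<n} \<Longrightarrow> w i \<le> A" using not_less by blast
    then have "(\<Sum>i<n. w i) \<le> real n * A"
      using sum_bounded_above[of "{..<n}" w A] by simp
    with True assms show False by simp
  qed
  then obtain i where "i < n" "A < w i" by blast
  then have "(w i, \<Sum>j\<in>{..<n}-{i}. w j) \<in> small_rest_region A x \<union> both_large_region A x"
    using True by (auto simp: small_rest_region_def both_large_region_def sum_diff1)
  with \<open>i < n\<close> show ?thesis
    by (intro order_trans[OF _ member_le_sum[of i]]) auto
qed (simp add: sum_nonneg)

lemma both_large_pair_or_rest:
  fixes w :: "nat \<Rightarrow> real"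
  assumes "i < n" "j < n" "i \<noteq> j" "A < w i" "A < w j" "x < (\<Sum>k<n. w k)"
  shows "(w i, w j) \<in> both_large_region A x \<or> (w i, \<Sum>k\<in>{..<n}-{i}. w k) \<in> both_large_region A x"
proof (cases "x < w i + w j")
  case False
  have "(\<Sum>k\<in>{..<n}-{i}. w k) = (\<Sum>k<n. w k) - w i"
    using assms(1) by (simp add: sum_diff1)
  with False assms(4-6) show ?thesis by (simp add: both_large_region_def)
qed (use assms(4,5) in \<open>simp add: both_large_region_def\<close>)

lemma count_le_indicator_sum_exceeds_plus_pairs:
  fixes w :: "nat \<Rightarrow> real" and n :: nat
  assumes "2 * A < x"
  defines "r \<equiv> \<lambda>i. \<Sum>k\<in>{..<n}-{i}. w k"
  shows "(\<Sum>i<n. indicator (small_rest_region A x \<union> both_large_region A x) (w i, r i) :: real)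
    \<le> indicator {x<..} (\<Sum>i<n. w i)
       + (\<Sum>j<n. \<Sum>i<j. indicator (both_large_region A x) (w i, w j)
                           + indicator (both_large_region A x) (w i, r i))"
proof -
  define E where "E = {i. i < n \<and> (w i, r i) \<in> small_rest_region A x \<union> both_large_region A x}"
  define F where "F i j = indicator (both_large_region A x) (w i, w j)
                         + (indicator (both_large_region A x) (w i, r i) :: real)" for i j
  have F_nonneg: "0 \<le> F i j" for i j by (simp add: F_def)
  have r_eq: "i < n \<Longrightarrow> r i = (\<Sum>k<n. w k) - w i" for i by (simp add: r_def sum_diff1)
  \<comment> \<open>\<open>w i \<le> A\<close> would force \<open>r i \<le> A\<close> and hence \<open>w i + r i \<le> 2 * A < x\<close>.\<close>
  have E_large: "i \<in> E \<Longrightarrow> A < w i \<and> x < (\<Sum>k<n. w k)" for i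
    using assms(1) r_eq[of i] by (auto simp: E_def small_rest_region_def both_large_region_def)
  have "(\<Sum>i<n. indicator (small_rest_region A x \<union> both_large_region A x) (w i, r i) :: real)
      = real (card E)"
    by (simp add: indicator_def of_bool_def sum.If_cases E_def Collect_conj_eq lessThan_def Int_commute)
  also have "\<dots> \<le> indicator {x<..} (\<Sum>i<n. w i) + (\<Sum>j<n. \<Sum>i<j. F i j)"
  proof (cases "E = {}")
    case False
    define m where "m = Min E"
    have "finite E" by (simp add: E_def)
    with False have "m \<in> E" by (simp add: m_def)
    have "1 \<le> (\<Sum>i<j. F i j)" if "j \<in> E - {m}" for j
    proof -
      have "m < j"
        using that \<open>finite E\<close> Min_le[of E j] by (auto simp: m_def order.order_iff_strict)
      moreover have "j < n" using that by (simp add: E_def)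
      ultimately have "1 \<le> F m j"
        using both_large_pair_or_rest[of m n j A w x] E_large[OF \<open>m \<in> E\<close>] E_large[of j] that
        by (auto simp: F_def r_def)
      also have "\<dots> \<le> (\<Sum>i<j. F i j)"
        using \<open>m < j\<close> by (intro member_le_sum) (auto simp: F_nonneg)
      finally show ?thesis .
    qed
    then have "real (card (E - {m})) \<le> (\<Sum>j\<in>E - {m}. \<Sum>i<j. F i j)"
      using sum_mono[of "E - {m}" "\<lambda>_. 1::real"] by simp
    also have "\<dots> \<le> (\<Sum>j<n. \<Sum>i<j. F i j)"
      by (intro sum_mono2) (auto simp: E_def F_nonneg sum_nonneg)
    finally show ?thesis
      using E_large[OF \<open>m \<in> E\<close>] \<open>finite E\<close> \<open>m \<in> E\<close> by (simp add: card_Diff_singleton)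
  qed (simp add: F_nonneg sum_nonneg)
  finally show ?thesis by (simp add: F_def)
qed

lemma has_bochner_integral_indicator_comp:
  assumes "finite_measure M" "f \<in> measurable M N" "S \<in> sets N"
  shows "has_bochner_integral M (\<lambda>\<omega>. indicator S (f \<omega>) :: real) (measure (distr M N f) S)"
proof -
  interpret finite_measure M by fact
  interpret D: finite_measure "distr M N f" using assms(2) by (rule finite_measure_distr)
  have "integrable M (\<lambda>\<omega>. indicator S (f \<omega>) :: real)"
    using assms(2,3) by (intro integrable_const_bound[where B = 1]) auto
  moreover have "(\<integral>\<omega>. indicator S (f \<omega>) \<partial>M) = (\<integral>z. indicator S z \<partial>distr M N f :: real)"
    using assms(2,3) by (intro integral_distr[symmetric]) auto
  ultimately show ?thesis
    using assms(3) by (simp add: has_bochner_integral_iff D.emeasure_finite less_top[symmetric])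
qed

lemma has_bochner_integral_le:
  fixes f g :: "'a \<Rightarrow> real"
  assumes "has_bochner_integral M f a" "has_bochner_integral M g b" "\<And>\<omega>. f \<omega> \<le> g \<omega>"
  shows "a \<le> b"
  using assms integral_mono[of M f g] by (simp add: has_bochner_integral_iff)

context
  fixes \<mu> :: "real measure" and I :: "'i set"
  assumes \<mu>: "real_distribution \<mu>" and finite_I: "finite I"
begin

lemma prob_space_iid: "prob_space (\<Pi>\<^sub>M i\<in>I. \<mu>)"
  using \<mu> by (intro prob_space_PiM) (simp add: real_distribution_prob_space)

lemma measurable_iid_component:
  "i \<in> I \<Longrightarrow> (\<lambda>\<omega>. \<omega> i) \<in> borel_measurable (\<Pi>\<^sub>M i\<in>I. \<mu>)"
  using measurable_component_singleton[of i I "\<lambda>_. \<mu>"]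
    measurable_cong_sets[OF refl sets_real_distribution[OF \<mu>], of "\<Pi>\<^sub>M i\<in>I. \<mu>"]
  by simp

lemma distr_iid_component: "i \<in> I \<Longrightarrow> distr (\<Pi>\<^sub>M i\<in>I. \<mu>) borel (\<lambda>\<omega>. \<omega> i) = \<mu>"
  using \<mu> by (subst distr_cong[OF refl sets_real_distribution[OF \<mu>, symmetric]])
    (auto intro!: distr_PiM_component simp: real_distribution_prob_space)

lemma indep_vars_iid:
  assumes "I \<noteq> {}"
  shows "prob_space.indep_vars (\<Pi>\<^sub>M i\<in>I. \<mu>) (\<lambda>_. borel) (\<lambda>i \<omega>. \<omega> i) I"
proof -
  interpret prob_space "\<Pi>\<^sub>M i\<in>I. \<mu>" by (rule prob_space_iid)
  have "distr (\<Pi>\<^sub>M i\<in>I. \<mu>) (\<Pi>\<^sub>M i\<in>I. borel) (\<lambda>\<omega>. \<lambda>i\<in>I. \<omega> i)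
      = distr (\<Pi>\<^sub>M i\<in>I. \<mu>) (\<Pi>\<^sub>M i\<in>I. \<mu>) (\<lambda>\<omega>. \<omega>)"
    by (rule distr_cong) (auto simp: sets_real_distribution[OF \<mu>] space_PiM intro!: sets_PiM_cong)
  also have "\<dots> = (\<Pi>\<^sub>M i\<in>I. distr (\<Pi>\<^sub>M i\<in>I. \<mu>) borel (\<lambda>\<omega>. \<omega> i))"
    unfolding distr_id by (rule PiM_cong) (simp_all add: distr_iid_component)
  finally show ?thesis
    using assms by (subst indep_vars_iff_distr_eq_PiM') (simp_all add: measurable_iid_component)
qed

lemma distr_iid_sum:
  assumes "J \<subseteq> I" "J \<noteq> {}"
  shows "distr (\<Pi>\<^sub>M i\<in>I. \<mu>) borel (\<lambda>\<omega>. \<Sum>i\<in>J. \<omega> i) = conv_pow \<mu> (card J)"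
proof -
  interpret prob_space "\<Pi>\<^sub>M i\<in>I. \<mu>" by (rule prob_space_iid)
  have "finite J" using assms(1) finite_I by (rule finite_subset)
  from this assms(2,1) show ?thesis
  proof (induction J rule: finite_ne_induct)
    case (singleton i)
    then show ?case by (simp add: distr_iid_component)
  next
    case (insert i J)
    have "indep_var borel (\<lambda>\<omega>. \<omega> i) borel (\<lambda>\<omega>. \<Sum>j\<in>J. \<omega> j)"
      using indep_vars_sum[OF insert.hyps(1,3) indep_vars_subset[OF indep_vars_iid insert.prems]]
        insert.prems by auto
    then have "distr (\<Pi>\<^sub>M i\<in>I. \<mu>) borel (\<lambda>\<omega>. \<omega> i + (\<Sum>j\<in>J. \<omega> j))
        = convolution \<mu> (conv_pow \<mu> (card J))"
      using insert by (simp add: sum_indep_random_variable distr_iid_component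
          measurable_iid_component borel_measurable_sum subset_iff)
    then show ?case
      using insert.hyps by (simp add: conv_pow_Suc Suc_leI card_gt_0_iff)
  qed
qed

lemma distr_iid_component_sum:
  assumes "i \<in> I" "J \<subseteq> I" "i \<notin> J" "J \<noteq> {}"
  shows "distr (\<Pi>\<^sub>M i\<in>I. \<mu>) (borel \<Otimes>\<^sub>M borel) (\<lambda>\<omega>. (\<omega> i, \<Sum>j\<in>J. \<omega> j))
       = \<mu> \<Otimes>\<^sub>M conv_pow \<mu> (card J)"
proof -
  interpret prob_space "\<Pi>\<^sub>M i\<in>I. \<mu>" by (rule prob_space_iid)
  have "finite J" using assms(2) finite_I by (rule finite_subset)
  have "indep_var borel (\<lambda>\<omega>. \<omega> i) borel (\<lambda>\<omega>. \<Sum>j\<in>J. \<omega> j)"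
    using indep_vars_sum[OF \<open>finite J\<close> assms(3) indep_vars_subset[OF indep_vars_iid]] assms(1,2)
    by auto
  then show ?thesis
    using assms by (simp add: indep_var_distribution_eq distr_iid_component distr_iid_sum)
qed

lemma finite_measure_iid: "finite_measure (\<Pi>\<^sub>M i\<in>I. \<mu>)"
  using prob_space_iid by (simp add: prob_space_def)

lemma has_bochner_integral_iid_sum:
  assumes "I \<noteq> {}" "T \<in> sets borel"
  shows "has_bochner_integral (\<Pi>\<^sub>M i\<in>I. \<mu>) (\<lambda>\<omega>. indicator T (\<Sum>i\<in>I. \<omega> i))
           (measure (conv_pow \<mu> (card I)) T)"
proof -
  have "(\<lambda>\<omega>. \<Sum>i\<in>I. \<omega> i) \<in> borel_measurable (\<Pi>\<^sub>M i\<in>I. \<mu>)"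
    by (intro borel_measurable_sum measurable_iid_component)
  from has_bochner_integral_indicator_comp[OF finite_measure_iid this assms(2)] show ?thesis
    using assms(1) by (simp add: distr_iid_sum)
qed

lemma has_bochner_integral_iid_component_sum:
  assumes "i \<in> I" "J \<subseteq> I" "i \<notin> J" "J \<noteq> {}" "S \<in> sets (borel \<Otimes>\<^sub>M borel)"
  shows "has_bochner_integral (\<Pi>\<^sub>M i\<in>I. \<mu>) (\<lambda>\<omega>. indicator S (\<omega> i, \<Sum>j\<in>J. \<omega> j))
           (measure (\<mu> \<Otimes>\<^sub>M conv_pow \<mu> (card J)) S)"
proof -
  have "(\<lambda>\<omega>. (\<omega> i, \<Sum>j\<in>J. \<omega> j)) \<in> measurable (\<Pi>\<^sub>M i\<in>I. \<mu>) (borel \<Otimes>\<^sub>M borel)"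
    using assms(1,2) by (intro measurable_Pair borel_measurable_sum measurable_iid_component) auto
  from has_bochner_integral_indicator_comp[OF finite_measure_iid this assms(5)] show ?thesis
    using assms(1-4) by (simp add: distr_iid_component_sum)
qed

end

lemma sum_lessThan_real: "(\<Sum>j<n. real j) = real n * (real n - 1) / 2"
  by (induction n) (auto simp: field_simps)

section \<open>Two-sided bounds for the tail of the convolution power\<close>

lemma J1_plus_J2_eq_measure:
  assumes \<mu>: "real_distribution \<mu>" and n: "2 \<le> n" and x: "2 * A \<le> x"
  shows "J1 \<mu> n A x + J2 \<mu> n A x
           = measure (\<mu> \<Otimes>\<^sub>M conv_pow \<mu> (n - 1)) (small_rest_region A x \<union> both_large_region A x)"
proof -
  define W where "W = conv_pow \<mu> (n - 1)"
  have W: "real_distribution W" using \<mu> n by (simp add: W_def real_distribution_conv_pow)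
  interpret prob_space "\<mu> \<Otimes>\<^sub>M W" using \<mu> W by (rule prob_space_pair_real_distribution)
  have "measure (\<mu> \<Otimes>\<^sub>M W) (small_rest_region A x \<union> both_large_region A x)
      = measure (\<mu> \<Otimes>\<^sub>M W) (small_rest_region A x) + measure (\<mu> \<Otimes>\<^sub>M W) (both_large_region A x)"
    using small_rest_both_large_disjoint
    by (intro finite_measure_Union) (simp_all add: sets_pair_real_distribution[OF \<mu> W])
  then show ?thesis
    by (simp add: W_def J1_eq_measure[OF \<mu> n] J2_eq_measure[OF \<mu> n x])
qed

lemma has_bochner_integral_iid_rest:
  assumes \<mu>: "real_distribution \<mu>" and n: "2 \<le> n" and i: "i < n"
    and S: "S \<in> sets (borel \<Otimes>\<^sub>M borel)"
  shows "has_bochner_integral (\<Pi>\<^sub>M i\<in>{..<n}. \<mu>) (\<lambda>\<omega>. indicator S (\<omega> i, \<Sum>j\<in>{..<n}-{i}. \<omega> j))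
           (measure (\<mu> \<Otimes>\<^sub>M conv_pow \<mu> (n - 1)) S)"
proof -
  have card: "card ({..<n} - {i}) = n - 1" using i by (simp add: card_Diff_singleton)
  with n have "{..<n} - {i} \<noteq> {}" by (intro notI) (simp only: card.empty)
  with has_bochner_integral_iid_component_sum[OF \<mu> finite_lessThan[of n], where i = i and J = "{..<n} - {i}"] i S
  show ?thesis by (simp add: card)
qed

lemma has_bochner_integral_iid_pair:
  fixes n :: nat
  assumes \<mu>: "real_distribution \<mu>" and "i < n" "j < n" "i \<noteq> j"
    and S: "S \<in> sets (borel \<Otimes>\<^sub>M borel)"
  shows "has_bochner_integral (\<Pi>\<^sub>M i\<in>{..<n}. \<mu>) (\<lambda>\<omega>. indicator S (\<omega> i, \<omega> j)) (measure (\<mu> \<Otimes>\<^sub>M \<mu>) S)"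
  using has_bochner_integral_iid_component_sum[OF \<mu> finite_lessThan[of n], where i = i and J = "{j}"] assms by simp

lemma has_bochner_integral_tail_event:
  assumes \<mu>: "real_distribution \<mu>" and n: "n \<noteq> 0"
  shows "has_bochner_integral (\<Pi>\<^sub>M i\<in>{..<n}. \<mu>) (\<lambda>\<omega>. indicator {x<..} (\<Sum>i<n. \<omega> i))
           (tail (conv_pow \<mu> n) x)"
  using has_bochner_integral_iid_sum[OF \<mu> finite_lessThan[of n], where T = "{x<..}"] n
  by (simp add: tail_def lessThan_empty_iff)

lemma has_bochner_integral_count:
  assumes \<mu>: "real_distribution \<mu>" and n: "2 \<le> n" and x: "2 * A \<le> x"
  shows "has_bochner_integral (\<Pi>\<^sub>M i\<in>{..<n}. \<mu>)
      (\<lambda>\<omega>. \<Sum>i<n. indicator (small_rest_region A x \<union> both_large_region A x) (\<omega> i, \<Sum>j\<in>{..<n}-{i}. \<omega> j))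
      (real n * (J1 \<mu> n A x + J2 \<mu> n A x))"
proof -
  have "has_bochner_integral (\<Pi>\<^sub>M i\<in>{..<n}. \<mu>)
      (\<lambda>\<omega>. \<Sum>i<n. indicator (small_rest_region A x \<union> both_large_region A x) (\<omega> i, \<Sum>j\<in>{..<n}-{i}. \<omega> j))
      (\<Sum>i<n. J1 \<mu> n A x + J2 \<mu> n A x)"
    using has_bochner_integral_iid_rest[OF \<mu> n _ sets.Un[OF small_rest_region_sets both_large_region_sets]]
    unfolding J1_plus_J2_eq_measure[OF \<mu> n x] by (intro has_bochner_integral_sum) simp
  then show ?thesis by simp
qed

lemma has_bochner_integral_pair_count:
  assumes \<mu>: "real_distribution \<mu>" and n: "2 \<le> n" and x: "2 * A \<le> x"
  shows "has_bochner_integral (\<Pi>\<^sub>M i\<in>{..<n}. \<mu>)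
      (\<lambda>\<omega>. \<Sum>j<n. \<Sum>i<j. indicator (both_large_region A x) (\<omega> i, \<omega> j)
                         + indicator (both_large_region A x) (\<omega> i, \<Sum>k\<in>{..<n}-{i}. \<omega> k))
      (real n * (real n - 1) / 2 * (J2 \<mu> n A x + J3 \<mu> A x))"
proof -
  have "has_bochner_integral (\<Pi>\<^sub>M i\<in>{..<n}. \<mu>)
      (\<lambda>\<omega>. \<Sum>j<n. \<Sum>i<j. indicator (both_large_region A x) (\<omega> i, \<omega> j)
                         + indicator (both_large_region A x) (\<omega> i, \<Sum>k\<in>{..<n}-{i}. \<omega> k))
      (\<Sum>j<n. \<Sum>i<j. J3 \<mu> A x + J2 \<mu> n A x)"
    unfolding J2_eq_measure[OF \<mu> n x] J3_eq_measure[OF \<mu> x]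
    by (intro has_bochner_integral_sum has_bochner_integral_add
        has_bochner_integral_iid_pair[OF \<mu> _ _ _ both_large_region_sets]
        has_bochner_integral_iid_rest[OF \<mu> n _ both_large_region_sets]) auto
  then show ?thesis
    by (simp add: sum_distrib_right[symmetric] sum_lessThan_real add.commute)
qed

lemma tail_conv_pow_le_J1_J2:
  assumes \<mu>: "real_distribution \<mu>" and n: "2 \<le> n" and A: "0 \<le> A" and x: "real n * A < x"
  shows "tail (conv_pow \<mu> n) x \<le> real n * (J1 \<mu> n A x + J2 \<mu> n A x)"
proof -
  have "2 * A \<le> real n * A" using n A by (intro mult_right_mono) auto
  with x have "2 * A \<le> x" by linarith
  with n show ?thesis
    by (intro has_bochner_integral_le[OF has_bochner_integral_tail_event[OF \<mu>]
          has_bochner_integral_count[OF \<mu> n] indicator_sum_exceeds_le_count[OF x]]) auto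
qed

lemma J1_J2_le_tail_conv_pow:
  assumes \<mu>: "real_distribution \<mu>" and n: "2 \<le> n" and A: "0 \<le> A" and x: "real n * A < x"
  shows "real n * (J1 \<mu> n A x + J2 \<mu> n A x)
           \<le> tail (conv_pow \<mu> n) x + real n * (real n - 1) / 2 * (J2 \<mu> n A x + J3 \<mu> A x)"
proof -
  have "2 * A \<le> real n * A" using n A by (intro mult_right_mono) auto
  with x have x2: "2 * A < x" by linarith
  with n show ?thesis
    by (intro has_bochner_integral_le[OF has_bochner_integral_count[OF \<mu> n]
          has_bochner_integral_add[OF has_bochner_integral_tail_event[OF \<mu>]
            has_bochner_integral_pair_count[OF \<mu> n]]
          count_le_indicator_sum_exceeds_plus_pairs[OF x2]]) auto
qed

section \<open>Shifting by independent summands\<close>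

lemma emeasure_pair_convolution_shift:
  assumes \<alpha>: "real_distribution \<alpha>" and \<beta>: "real_distribution \<beta>"
    and \<tau>\<^sub>1: "real_distribution \<tau>\<^sub>1" and \<tau>\<^sub>2: "real_distribution \<tau>\<^sub>2"
    and S[measurable]: "S \<in> sets (borel \<Otimes>\<^sub>M borel)" and T[measurable]: "T \<in> sets (borel \<Otimes>\<^sub>M borel)"
    and shift: "\<And>a b t s. (a, b) \<in> S \<Longrightarrow> -B < t \<Longrightarrow> -B < s \<Longrightarrow> (a + t, b + s) \<in> T"
  shows "emeasure \<tau>\<^sub>1 {-B<..} * emeasure \<tau>\<^sub>2 {-B<..} * emeasure (\<alpha> \<Otimes>\<^sub>M \<beta>) S
           \<le> emeasure (convolution \<alpha> \<tau>\<^sub>1 \<Otimes>\<^sub>M convolution \<beta> \<tau>\<^sub>2) T"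
proof -
  have sets_eq[measurable_cong]: "sets \<alpha> = sets borel" "sets \<beta> = sets borel" "sets \<tau>\<^sub>1 = sets borel"
    "sets \<tau>\<^sub>2 = sets borel"
    using \<alpha> \<beta> \<tau>\<^sub>1 \<tau>\<^sub>2 by (simp_all add: sets_real_distribution)
  have finite: "finite_measure \<alpha>" "finite_measure \<beta>" "finite_measure \<tau>\<^sub>1" "finite_measure \<tau>\<^sub>2"
    using \<alpha> \<beta> \<tau>\<^sub>1 \<tau>\<^sub>2 by (simp_all add: real_distribution_finite_measure)
  interpret \<beta>\<tau>: finite_measure "convolution \<beta> \<tau>\<^sub>2"
    using \<beta> \<tau>\<^sub>2 by (simp add: real_distribution_convolution real_distribution_finite_measure)
  interpret \<beta>: finite_measure \<beta> by (fact finite)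
  interpret \<tau>\<^sub>2: finite_measure \<tau>\<^sub>2 by (fact finite)
  define I where "I t = (indicator {-B<..} t :: ennreal)" for t
  define F where "F u v = (indicator T (u, v) :: ennreal)" for u v
  define G where "G a b = (indicator S (a, b) :: ennreal)" for a b
  have [measurable]: "I \<in> borel_measurable borel"
    "(\<lambda>(u, v). F u v) \<in> borel_measurable (borel \<Otimes>\<^sub>M borel)"
    "(\<lambda>(a, b). G a b) \<in> borel_measurable (borel \<Otimes>\<^sub>M borel)"
    unfolding I_def F_def G_def by (simp_all add: case_prod_beta')
  have "emeasure (convolution \<alpha> \<tau>\<^sub>1 \<Otimes>\<^sub>M convolution \<beta> \<tau>\<^sub>2) T
      = (\<integral>\<^sup>+u. \<integral>\<^sup>+v. F u v \<partial>convolution \<beta> \<tau>\<^sub>2 \<partial>convolution \<alpha> \<tau>\<^sub>1)"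
    unfolding F_def using T
    by (subst \<beta>\<tau>.emeasure_pair_measure) (simp_all add: sets_pair_measure_cong[OF sets_convolution sets_convolution])
  also have "\<dots> = (\<integral>\<^sup>+u. \<integral>\<^sup>+b. \<integral>\<^sup>+s. F u (b + s) \<partial>\<tau>\<^sub>2 \<partial>\<beta> \<partial>convolution \<alpha> \<tau>\<^sub>1)"
    by (intro nn_integral_cong nn_integral_convolution finite) (simp_all add: sets_eq)
  also have "\<dots> = (\<integral>\<^sup>+a. \<integral>\<^sup>+t. \<integral>\<^sup>+b. \<integral>\<^sup>+s. F (a + t) (b + s) \<partial>\<tau>\<^sub>2 \<partial>\<beta> \<partial>\<tau>\<^sub>1 \<partial>\<alpha>)"
    by (rule nn_integral_convolution) (simp_all add: finite sets_eq)
  also have "\<dots> \<ge> (\<integral>\<^sup>+a. \<integral>\<^sup>+t. \<integral>\<^sup>+b. \<integral>\<^sup>+s. G a b * I t * I s \<partial>\<tau>\<^sub>2 \<partial>\<beta> \<partial>\<tau>\<^sub>1 \<partial>\<alpha>)"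
    by (intro nn_integral_mono) (auto simp: F_def G_def I_def indicator_def shift)
  also have "(\<integral>\<^sup>+a. \<integral>\<^sup>+t. \<integral>\<^sup>+b. \<integral>\<^sup>+s. G a b * I t * I s \<partial>\<tau>\<^sub>2 \<partial>\<beta> \<partial>\<tau>\<^sub>1 \<partial>\<alpha>)
      = (\<integral>\<^sup>+a. \<integral>\<^sup>+t. \<integral>\<^sup>+b. (I t * emeasure \<tau>\<^sub>2 {-B<..}) * G a b \<partial>\<beta> \<partial>\<tau>\<^sub>1 \<partial>\<alpha>)"
    unfolding I_def
    by (intro nn_integral_cong, subst nn_integral_cmult_indicator) (auto simp: mult_ac sets_eq)
  also have "\<dots> = (\<integral>\<^sup>+a. \<integral>\<^sup>+t. (emeasure \<tau>\<^sub>2 {-B<..} * (\<integral>\<^sup>+b. G a b \<partial>\<beta>)) * I t \<partial>\<tau>\<^sub>1 \<partial>\<alpha>)"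
    by (intro nn_integral_cong, subst nn_integral_cmult) (auto simp: mult_ac)
  also have "\<dots> = (\<integral>\<^sup>+a. (emeasure \<tau>\<^sub>1 {-B<..} * emeasure \<tau>\<^sub>2 {-B<..}) * (\<integral>\<^sup>+b. G a b \<partial>\<beta>) \<partial>\<alpha>)"
    unfolding I_def
    by (intro nn_integral_cong, subst nn_integral_cmult_indicator) (auto simp: mult_ac sets_eq)
  also have "\<dots> = emeasure \<tau>\<^sub>1 {-B<..} * emeasure \<tau>\<^sub>2 {-B<..} * (\<integral>\<^sup>+a. \<integral>\<^sup>+b. G a b \<partial>\<beta> \<partial>\<alpha>)"
    by (rule nn_integral_cmult) measurable
  also have "(\<integral>\<^sup>+a. \<integral>\<^sup>+b. G a b \<partial>\<beta> \<partial>\<alpha>) = emeasure (\<alpha> \<Otimes>\<^sub>M \<beta>) S"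
    unfolding G_def by (rule \<beta>.emeasure_pair_measure[symmetric]) measurable
  finally show ?thesis .
qed

lemma measure_pair_convolution_shift:
  assumes \<alpha>: "real_distribution \<alpha>" and \<beta>: "real_distribution \<beta>"
    and \<tau>\<^sub>1: "real_distribution \<tau>\<^sub>1" and \<tau>\<^sub>2: "real_distribution \<tau>\<^sub>2"
    and S: "S \<in> sets (borel \<Otimes>\<^sub>M borel)" and T: "T \<in> sets (borel \<Otimes>\<^sub>M borel)"
    and shift: "\<And>a b t s. (a, b) \<in> S \<Longrightarrow> -B < t \<Longrightarrow> -B < s \<Longrightarrow> (a + t, b + s) \<in> T"
  shows "tail \<tau>\<^sub>1 (-B) * tail \<tau>\<^sub>2 (-B) * measure (\<alpha> \<Otimes>\<^sub>M \<beta>) S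
           \<le> measure (convolution \<alpha> \<tau>\<^sub>1 \<Otimes>\<^sub>M convolution \<beta> \<tau>\<^sub>2) T"
proof -
  interpret prob_space "convolution \<alpha> \<tau>\<^sub>1 \<Otimes>\<^sub>M convolution \<beta> \<tau>\<^sub>2"
    using \<alpha> \<beta> \<tau>\<^sub>1 \<tau>\<^sub>2 by (intro prob_space_pair_real_distribution real_distribution_convolution)
  show ?thesis
    using enn2real_mono[OF emeasure_pair_convolution_shift[OF assms] emeasure_finite[THEN less_top[THEN iffD1]]]
    by (simp add: tail_def measure_def enn2real_mult)
qed

lemma both_large_region_shift:
  "(a, b) \<in> both_large_region A x \<Longrightarrow> -B < t \<Longrightarrow> -B < s
     \<Longrightarrow> (a + t, b + s) \<in> both_large_region (A - B) (x - 2 * B)"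
  by (auto simp: both_large_region_def)

lemma J3_shift_le:
  assumes \<mu>: "real_distribution \<mu>" and n: "2 \<le> n" and x: "2 * A \<le> x"
  shows "tail (conv_pow \<mu> (n - 1)) (-B) * tail (conv_pow \<mu> (n - 1)) (-B) * J3 \<mu> A x
     \<le> measure (conv_pow \<mu> n \<Otimes>\<^sub>M conv_pow \<mu> n) (both_large_region (A - B) (x - 2 * B))"
  using measure_pair_convolution_shift[OF \<mu> \<mu> real_distribution_conv_pow real_distribution_conv_pow
      both_large_region_sets both_large_region_sets both_large_region_shift] \<mu> n
  by (simp add: J3_eq_measure[OF \<mu> x] conv_pow_eq_convolution[OF n])

lemma J2_shift_le:
  assumes \<mu>: "real_distribution \<mu>" and n: "2 \<le> n" and x: "2 * A \<le> x"
  shows "tail (conv_pow \<mu> (n - 1)) (-B) * tail \<mu> (-B) * J2 \<mu> n A x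
     \<le> measure (conv_pow \<mu> n \<Otimes>\<^sub>M conv_pow \<mu> n) (both_large_region (A - B) (x - 2 * B))"
proof -
  have W: "real_distribution (conv_pow \<mu> (n - 1))" using \<mu> n by (simp add: real_distribution_conv_pow)
  have "convolution (conv_pow \<mu> (n - 1)) \<mu> = convolution \<mu> (conv_pow \<mu> (n - 1))"
    using W \<mu> by (intro convolution_commutative) (simp_all add: real_distribution_finite_measure
        sets_real_distribution)
  then show ?thesis
    using measure_pair_convolution_shift[OF \<mu> W W \<mu> both_large_region_sets both_large_region_sets
        both_large_region_shift]
    by (simp add: J2_eq_measure[OF \<mu> n x] conv_pow_eq_convolution[OF n])
qed

lemma J2_J3_le_both_large_shift:
  fixes B :: real
  assumes \<mu>: "real_distribution \<mu>" and n: "2 \<le> n" and x: "2 * A \<le> x"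
  defines "c \<equiv> min (tail (conv_pow \<mu> (n - 1)) (-B) * tail (conv_pow \<mu> (n - 1)) (-B))
                    (tail (conv_pow \<mu> (n - 1)) (-B) * tail \<mu> (-B))"
  shows "c * (J2 \<mu> n A x + J3 \<mu> A x)
           \<le> 2 * measure (conv_pow \<mu> n \<Otimes>\<^sub>M conv_pow \<mu> n) (both_large_region (A - B) (x - 2 * B))"
proof -
  have "c * J3 \<mu> A x \<le> tail (conv_pow \<mu> (n - 1)) (-B) * tail (conv_pow \<mu> (n - 1)) (-B) * J3 \<mu> A x"
    "c * J2 \<mu> n A x \<le> tail (conv_pow \<mu> (n - 1)) (-B) * tail \<mu> (-B) * J2 \<mu> n A x"
    using J3_eq_measure[OF \<mu> x] J2_eq_measure[OF \<mu> n x] unfolding c_def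
    by (simp_all add: mult_right_mono)
  with J3_shift_le[OF \<mu> n x, of B] J2_shift_le[OF \<mu> n x, of B] show ?thesis
    by (simp add: distrib_left)
qed

section \<open>Subexponential distributions\<close>

lemma tail_convolution_self_split:
  assumes \<rho>: "real_distribution \<rho>" and x: "2 * A \<le> x"
  shows "tail (convolution \<rho> \<rho>) x
           = measure (\<rho> \<Otimes>\<^sub>M \<rho>) (both_large_region A x) + 2 * measure (\<rho> \<Otimes>\<^sub>M \<rho>) (small_rest_region A x)"
proof -
  interpret pair_prob_space \<rho> \<rho> using \<rho> \<rho> by (rule pair_prob_space_real_distribution)
  have sets_eq: "sets (\<rho> \<Otimes>\<^sub>M \<rho>) = sets (borel \<Otimes>\<^sub>M borel)"
    using \<rho> \<rho> by (rule sets_pair_real_distribution)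
  have [measurable_cong]: "sets \<rho> = sets borel" using \<rho> by (rule sets_real_distribution)
  define swap where "swap = (\<lambda>(t, r). (r, t) :: real \<times> real)"
  have swap_meas: "swap \<in> measurable (\<rho> \<Otimes>\<^sub>M \<rho>) (\<rho> \<Otimes>\<^sub>M \<rho>)"
    unfolding swap_def by measurable
  have space_eq: "space (\<rho> \<Otimes>\<^sub>M \<rho>) = UNIV"
    using space_real_distribution[OF \<rho>] by (simp add: space_pair_measure)
  let ?L = "both_large_region A x" and ?S = "small_rest_region A x"
  have "{z. x < fst z + snd z} = ?L \<union> ?S \<union> swap -` ?S"
    by (auto simp: both_large_region_def small_rest_region_def swap_def)
  moreover have "tail (convolution \<rho> \<rho>) x = measure (\<rho> \<Otimes>\<^sub>M \<rho>) {z. x < fst z + snd z}"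
    by (simp add: tail_def convolution_def measure_distr space_eq case_prod_beta' vimage_def)
  moreover have "measure (\<rho> \<Otimes>\<^sub>M \<rho>) (swap -` ?S) = measure (\<rho> \<Otimes>\<^sub>M \<rho>) ?S"
    using distr_pair_swap measure_distr[OF swap_meas, of ?S] sets_eq
    by (simp add: swap_def space_eq)
  moreover have "(?L \<union> ?S) \<inter> swap -` ?S = {}" "?L \<inter> ?S = {}"
    using x by (auto simp: both_large_region_def small_rest_region_def swap_def)
  moreover have "swap -` ?S \<in> sets (\<rho> \<Otimes>\<^sub>M \<rho>)"
    using measurable_sets[OF swap_meas, of ?S] sets_eq by (simp add: space_eq)
  ultimately show ?thesis
    using sets_eq by (simp add: P.finite_measure_Union)
qed

lemma truncated_mgf_tendsto:
  assumes \<rho>: "real_distribution \<rho>" and mgf: "mgf \<rho> \<gamma> < \<infinity>"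
  shows "((\<lambda>A. LINT v:{..A}|\<rho>. exp (\<gamma> * v)) \<longlongrightarrow> enn2real (mgf \<rho> \<gamma>)) at_top"
proof -
  have [measurable_cong]: "sets \<rho> = sets borel" using \<rho> by (rule sets_real_distribution)
  have exp_meas: "(\<lambda>v. exp (\<gamma> * v)) \<in> borel_measurable \<rho>" by measurable
  then have integrable: "integrable \<rho> (\<lambda>v. exp (\<gamma> * v))"
    using mgf by (simp add: integrable_iff_bounded mgf_def)
  have mgf_eq: "enn2real (mgf \<rho> \<gamma>) = (\<integral>v. exp (\<gamma> * v) \<partial>\<rho>)"
    using integral_eq_nn_integral[OF exp_meas] by (simp add: mgf_def)
  have "((\<lambda>A. \<integral>v. indicator {..A} v *\<^sub>R exp (\<gamma> * v) \<partial>\<rho>) \<longlongrightarrow> (\<integral>v. exp (\<gamma> * v) \<partial>\<rho>)) at_top"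
  proof (rule integral_dominated_convergence_at_top[where w = "\<lambda>v. exp (\<gamma> * v)"])
    show "AE v in \<rho>. ((\<lambda>A. indicator {..A} v *\<^sub>R exp (\<gamma> * v)) \<longlongrightarrow> exp (\<gamma> * v)) at_top"
    proof (intro AE_I2 tendsto_eventually)
      fix v :: real
      show "\<forall>\<^sub>F A in at_top. indicator {..A} v *\<^sub>R exp (\<gamma> * v) = exp (\<gamma> * v)"
        using eventually_ge_at_top[of v] by eventually_elim simp
    qed
  qed (use exp_meas integrable in \<open>auto simp: indicator_def\<close>)
  then show ?thesis by (simp add: set_lebesgue_integral_def mgf_eq)
qed

lemma class_L_tail_ratio_tendsto:
  assumes "class_L \<gamma> \<rho>"
  shows "((\<lambda>x. tail \<rho> (x - v) / tail \<rho> x) \<longlongrightarrow> exp (\<gamma> * v)) at_top"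
proof -
  have "((\<lambda>x. tail \<rho> (x + - v) / tail \<rho> x) \<longlongrightarrow> exp (- \<gamma> * - v)) at_top"
    using assms unfolding class_L_def by blast
  then show ?thesis by simp
qed

lemma small_rest_ratio_tendsto:
  assumes \<rho>: "real_distribution \<rho>" and L: "class_L \<gamma> \<rho>"
  shows "((\<lambda>x. measure (\<rho> \<Otimes>\<^sub>M \<rho>) (small_rest_region A x) / tail \<rho> x)
           \<longlongrightarrow> (LINT v:{..A}|\<rho>. exp (\<gamma> * v))) at_top"
proof -
  have [measurable_cong]: "sets \<rho> = sets borel" using \<rho> by (rule sets_real_distribution)
  interpret prob_space \<rho> using \<rho> by (rule real_distribution_prob_space)
  have tail_pos: "0 < tail \<rho> x" for x using L by (simp add: class_L_def)
  have lim: "((\<lambda>x. \<integral>v. indicator {..A} v * (tail \<rho> (x - v) / tail \<rho> x) \<partial>\<rho>)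
      \<longlongrightarrow> (\<integral>v. indicator {..A} v * exp (\<gamma> * v) \<partial>\<rho>)) at_top"
  proof (rule integral_dominated_convergence_at_top[where w = "\<lambda>v. exp (\<gamma> * A) + 1"])
    show "AE v in \<rho>. ((\<lambda>x. indicator {..A} v * (tail \<rho> (x - v) / tail \<rho> x))
        \<longlongrightarrow> indicator {..A} v * exp (\<gamma> * v)) at_top"
      using L by (intro AE_I2 tendsto_mult_left class_L_tail_ratio_tendsto)
    have "\<forall>\<^sub>F x in at_top. tail \<rho> (x - A) / tail \<rho> x < exp (\<gamma> * A) + 1"
      using L by (intro order_tendstoD(2)[OF class_L_tail_ratio_tendsto]) auto
    then show "\<forall>\<^sub>F x in at_top. AE v in \<rho>.
        norm (indicator {..A} v * (tail \<rho> (x - v) / tail \<rho> x)) \<le> exp (\<gamma> * A) + 1"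
    proof eventually_elim
      case (elim x)
      have "tail \<rho> (x - v) / tail \<rho> x \<le> exp (\<gamma> * A) + 1" if "v \<le> A" for v
        using tail_antimono[OF \<rho>, of "x - A" "x - v"] that elim tail_pos[of x]
        by (smt (verit) divide_right_mono)
      then show ?case
        using tail_pos[of x] tail_nonneg[of \<rho>]
        by (intro AE_I2) (simp add: indicator_def add_nonneg_nonneg)
    qed
  qed (use \<rho> in \<open>auto simp: indicator_def\<close>)
  have eq: "(\<integral>v. indicator {..A} v * (tail \<rho> (x - v) / tail \<rho> x) \<partial>\<rho>)
      = measure (\<rho> \<Otimes>\<^sub>M \<rho>) (small_rest_region A x) / tail \<rho> x" for x
    unfolding measure_small_rest_region[OF \<rho> \<rho>] set_lebesgue_integral_def
    by (simp only: integral_divide_zero[symmetric] times_divide_eq_right real_scaleR_def)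
  show ?thesis
    using lim unfolding eq set_lebesgue_integral_def real_scaleR_def .
qed

lemma both_large_negligible:
  assumes \<rho>: "real_distribution \<rho>" and S: "class_S \<gamma> \<rho>" and \<delta>: "0 < \<delta>"
  shows "\<forall>\<^sub>F A in at_top. \<forall>\<^sub>F x in at_top. measure (\<rho> \<Otimes>\<^sub>M \<rho>) (both_large_region A x) \<le> \<delta> * tail \<rho> x"
proof -
  define m where "m = enn2real (mgf \<rho> \<gamma>)"
  have L: "class_L \<gamma> \<rho>" and tail_pos: "0 < tail \<rho> x" for x
    using S by (simp_all add: class_S_def class_L_def)
  have "\<forall>\<^sub>F A in at_top. m - \<delta> / 4 < (LINT v:{..A}|\<rho>. exp (\<gamma> * v))"
    using S \<delta> unfolding m_def
    by (intro order_tendstoD(1)[OF truncated_mgf_tendsto[OF \<rho>]]) (simp_all add: class_S_def)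
  then show ?thesis
  proof eventually_elim
    case (elim A)
    have "((\<lambda>x. tail (conv_pow \<rho> 2) x / tail \<rho> x - 2 * (measure (\<rho> \<Otimes>\<^sub>M \<rho>) (small_rest_region A x) / tail \<rho> x))
        \<longlongrightarrow> 2 * m - 2 * (LINT v:{..A}|\<rho>. exp (\<gamma> * v))) at_top"
      using S unfolding m_def class_S_def
      by (intro tendsto_diff tendsto_mult_left small_rest_ratio_tendsto[OF \<rho> L]) simp
    moreover have "2 * m - 2 * (LINT v:{..A}|\<rho>. exp (\<gamma> * v)) < \<delta>"
      using elim \<delta> by linarith
    ultimately have "\<forall>\<^sub>F x in at_top.
        tail (conv_pow \<rho> 2) x / tail \<rho> x - 2 * (measure (\<rho> \<Otimes>\<^sub>M \<rho>) (small_rest_region A x) / tail \<rho> x) < \<delta>"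
      by (rule order_tendstoD(2))
    with eventually_ge_at_top[of "2 * A"] show ?case
    proof eventually_elim
      case (elim x)
      then have "tail (conv_pow \<rho> 2) x - 2 * measure (\<rho> \<Otimes>\<^sub>M \<rho>) (small_rest_region A x) < \<delta> * tail \<rho> x"
        using tail_pos[of x] by (simp add: field_simps)
      then show ?case
        using tail_convolution_self_split[OF \<rho> elim(1)] by (simp add: numeral_2_eq_2)
    qed
  qed
qed

lemma eventually_at_top_diff_const:
  fixes c :: real
  assumes "\<forall>\<^sub>F x in at_top. P x"
  shows "\<forall>\<^sub>F x in at_top. P (x - c)"
proof -
  obtain N where "\<And>x. N \<le> x \<Longrightarrow> P x" using assms by (auto simp: eventually_at_top_linorder)
  then show ?thesis by (intro eventually_at_top_linorderI[of "N + c"]) simp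
qed

lemma eventually_tail_shift_le:
  assumes "class_L \<gamma> \<rho>"
  shows "\<forall>\<^sub>F x in at_top. tail \<rho> (x - c) \<le> (exp (\<gamma> * c) + 1) * tail \<rho> x"
proof -
  have "\<forall>\<^sub>F x in at_top. tail \<rho> (x - c) / tail \<rho> x < exp (\<gamma> * c) + 1"
    using assms by (intro order_tendstoD(2)[OF class_L_tail_ratio_tendsto]) auto
  then show ?thesis
    using assms by (auto simp: class_L_def divide_less_eq less_imp_le elim!: eventually_mono)
qed

lemma J2_J3_negligible:
  assumes \<mu>: "real_distribution \<mu>" and n: "2 \<le> n" and S: "class_S \<gamma> (conv_pow \<mu> n)" and \<epsilon>: "0 < \<epsilon>"
  shows "\<forall>\<^sub>F A in at_top. \<forall>\<^sub>F x in at_top. J2 \<mu> n A x + J3 \<mu> A x \<le> \<epsilon> * tail (conv_pow \<mu> n) x"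
proof -
  define \<rho> where "\<rho> = conv_pow \<mu> n"
  define W where "W = conv_pow \<mu> (n - 1)"
  have \<rho>: "real_distribution \<rho>" and W: "real_distribution W"
    using \<mu> n by (simp_all add: \<rho>_def W_def real_distribution_conv_pow)
  have L: "class_L \<gamma> \<rho>" using S by (simp add: \<rho>_def class_S_def)
  have "\<forall>\<^sub>F B in at_top. 0 < tail W (-B) \<and> 0 < tail \<mu> (-B)"
    using eventually_tail_pos_at_bot[OF W] eventually_tail_pos_at_bot[OF \<mu>]
    by (intro eventually_conj eventually_compose_filterlim[OF _ filterlim_uminus_at_bot_at_top])
  then obtain B where tail_W: "0 < tail W (-B)" and tail_\<mu>: "0 < tail \<mu> (-B)"
    by (auto simp: eventually_at_top_linorder)
  define c where "c = min (tail W (-B) * tail W (-B)) (tail W (-B) * tail \<mu> (-B))"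
  define D where "D = exp (\<gamma> * (2 * B)) + 1"
  define \<delta> where "\<delta> = \<epsilon> * c / (2 * D)"
  have c: "0 < c" using tail_W tail_\<mu> by (simp add: c_def)
  have D: "0 < D" by (simp add: D_def add_pos_pos)
  have \<delta>: "0 < \<delta>" using \<epsilon> c D by (simp add: \<delta>_def)
  have long_tail: "\<forall>\<^sub>F x in at_top. tail \<rho> (x - 2 * B) \<le> D * tail \<rho> x"
    unfolding D_def using L by (rule eventually_tail_shift_le)
  have "\<forall>\<^sub>F A in at_top. \<forall>\<^sub>F x in at_top.
      measure (\<rho> \<Otimes>\<^sub>M \<rho>) (both_large_region (A - B) x) \<le> \<delta> * tail \<rho> x"
    using both_large_negligible[OF \<rho> S[folded \<rho>_def] \<delta>] by (rule eventually_at_top_diff_const)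
  then show ?thesis
  proof eventually_elim
    case (elim A)
    from eventually_at_top_diff_const[OF elim, of "2 * B"] long_tail eventually_ge_at_top[of "2 * A"]
    show ?case
    proof eventually_elim
      case (elim x)
      have "c * (J2 \<mu> n A x + J3 \<mu> A x)
          \<le> 2 * measure (\<rho> \<Otimes>\<^sub>M \<rho>) (both_large_region (A - B) (x - 2 * B))"
        unfolding c_def \<rho>_def W_def by (rule J2_J3_le_both_large_shift[OF \<mu> n elim(3)])
      also have "\<dots> \<le> 2 * (\<delta> * (D * tail \<rho> x))"
        using elim(1) mult_left_mono[OF elim(2) less_imp_le[OF \<delta>]] by linarith
      also have "\<dots> = c * (\<epsilon> * tail \<rho> x)" using D by (simp add: \<delta>_def)
      finally have "c * (J2 \<mu> n A x + J3 \<mu> A x) \<le> c * (\<epsilon> * tail \<rho> x)" .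
      with c show ?case by (simp add: \<rho>_def)
    qed
  qed
qed

lemma tendsto_ereal_of_eventually_close:
  assumes "\<And>\<epsilon>. 0 < \<epsilon> \<Longrightarrow> \<forall>\<^sub>F A in F. ereal (c - \<epsilon>) \<le> g A \<and> g A \<le> ereal (c + \<epsilon>)"
  shows "(g \<longlongrightarrow> ereal c) F"
proof (rule order_tendstoI)
  fix a assume "a < ereal c"
  then obtain r where r: "a < ereal r" "r < c" using ereal_dense2 by force
  from assms[of "c - r"] r(2) show "\<forall>\<^sub>F A in F. a < g A"
    by (auto elim!: eventually_mono intro: less_le_trans[OF r(1)])
next
  fix a assume "ereal c < a"
  then obtain r where r: "ereal r < a" "c < r" using ereal_dense2 by force
  from assms[of "r - c"] r(2) show "\<forall>\<^sub>F A in F. g A < a"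
    by (auto elim!: eventually_mono intro: le_less_trans[OF _ r(1)])
qed

lemma Limsup_Liminf_tendsto_of_uniform:
  fixes f :: "'a \<Rightarrow> real \<Rightarrow> real"
  assumes "\<And>\<epsilon>. 0 < \<epsilon> \<Longrightarrow> \<forall>\<^sub>F A in F. \<forall>\<^sub>F x in at_top. \<bar>f A x - c\<bar> \<le> \<epsilon>"
  shows "((\<lambda>A. Limsup at_top (\<lambda>x. ereal (f A x))) \<longlongrightarrow> ereal c) F"
    and "((\<lambda>A. Liminf at_top (\<lambda>x. ereal (f A x))) \<longlongrightarrow> ereal c) F"
proof -
  have bounds: "\<forall>\<^sub>F A in F. ereal (c - \<epsilon>) \<le> Liminf at_top (\<lambda>x. ereal (f A x))
      \<and> Limsup at_top (\<lambda>x. ereal (f A x)) \<le> ereal (c + \<epsilon>)" if "0 < \<epsilon>" for \<epsilon>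
    using assms[OF that]
  proof eventually_elim
    case (elim A)
    then show ?case
      by (intro conjI Liminf_bounded Limsup_bounded) (auto elim!: eventually_mono simp: abs_le_iff)
  qed
  have Liminf_le_Limsup: "Liminf at_top (\<lambda>x. ereal (f A x)) \<le> Limsup at_top (\<lambda>x. ereal (f A x))" for A
    by (rule Liminf_le_Limsup) simp
  show "((\<lambda>A. Limsup at_top (\<lambda>x. ereal (f A x))) \<longlongrightarrow> ereal c) F"
  proof (rule tendsto_ereal_of_eventually_close)
    fix \<epsilon> :: real assume "0 < \<epsilon>"
    from bounds[OF this] show "\<forall>\<^sub>F A in F. ereal (c - \<epsilon>) \<le> Limsup at_top (\<lambda>x. ereal (f A x))
        \<and> Limsup at_top (\<lambda>x. ereal (f A x)) \<le> ereal (c + \<epsilon>)"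
      by eventually_elim (use Liminf_le_Limsup in \<open>blast intro: order_trans\<close>)
  qed
  show "((\<lambda>A. Liminf at_top (\<lambda>x. ereal (f A x))) \<longlongrightarrow> ereal c) F"
  proof (rule tendsto_ereal_of_eventually_close)
    fix \<epsilon> :: real assume "0 < \<epsilon>"
    from bounds[OF this] show "\<forall>\<^sub>F A in F. ereal (c - \<epsilon>) \<le> Liminf at_top (\<lambda>x. ereal (f A x))
        \<and> Liminf at_top (\<lambda>x. ereal (f A x)) \<le> ereal (c + \<epsilon>)"
      by eventually_elim (use Liminf_le_Limsup in \<open>blast intro: order_trans\<close>)
  qed
qed

lemma abs_diff_le_of_J_bounds:
  fixes N a b c t :: real
  assumes N: "2 \<le> N" and b: "0 \<le> b" and c: "0 \<le> c"
    and upper: "t \<le> N * a + N * b"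
    and lower: "N * a - N * (N - 3) / 2 * b - N * (N - 1) / 2 * c \<le> t"
  shows "\<bar>N * a - t\<bar> \<le> N\<^sup>2 * (b + c)"
proof -
  have "b \<le> 1 * (b + c)" "1 * (b + c) \<le> N * (b + c)"
    using N b c by (simp, intro mult_right_mono) auto
  then have "N * b \<le> N * (N * (b + c))"
    using N by (intro mult_left_mono) auto
  then have "N * b \<le> N\<^sup>2 * (b + c)"
    by (simp add: power2_eq_square mult.assoc)
  moreover have "N * (N - 3) \<le> N * (2 * N)" "N * (N - 1) \<le> N * (2 * N)"
    using N by (intro mult_left_mono; simp)+
  then have "N * (N - 3) / 2 * b \<le> N\<^sup>2 * b" "N * (N - 1) / 2 * c \<le> N\<^sup>2 * c"
    using b c by (intro mult_right_mono; simp add: power2_eq_square)+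
  ultimately show ?thesis
    using upper lower by (simp add: abs_le_iff distrib_left)
qed

lemma eps_tendsto_zero:
  assumes \<mu>: "real_distribution \<mu>" and n: "2 \<le> n" and S: "class_S \<gamma> (conv_pow \<mu> n)"
  shows "((\<lambda>A. eps \<mu> n A) \<longlongrightarrow> 0) at_top"
proof -
  have tail_pos: "0 < tail (conv_pow \<mu> n) x" for x using S by (simp add: class_S_def class_L_def)
  have "\<forall>\<^sub>F A in at_top. \<forall>\<^sub>F x in at_top.
      \<bar>(J2 \<mu> n A x + J3 \<mu> A x) / tail (conv_pow \<mu> n) x - 0\<bar> \<le> \<epsilon>" if "0 < \<epsilon>" for \<epsilon>
    using J2_J3_negligible[OF \<mu> n S that]
  proof eventually_elim
    case (elim A)
    from elim eventually_ge_at_top[of "2 * A"] show ?case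
    proof eventually_elim
      case (elim x)
      have "0 \<le> J2 \<mu> n A x + J3 \<mu> A x"
        using elim(2) by (simp add: J2_eq_measure[OF \<mu> n] J3_eq_measure[OF \<mu>])
      with elim(1) tail_pos[of x] show ?case by (simp add: divide_le_eq)
    qed
  qed
  then show ?thesis
    unfolding eps_def zero_ereal_def by (rule Limsup_Liminf_tendsto_of_uniform(1))
qed

lemma J1_ratio_uniformly_close:
  assumes \<mu>: "real_distribution \<mu>" and n: "2 \<le> n" and S: "class_S \<gamma> (conv_pow \<mu> n)"
    and \<epsilon>: "0 < \<epsilon>"
  shows "\<forall>\<^sub>F A in at_top. \<forall>\<^sub>F x in at_top. \<bar>real n * J1 \<mu> n A x / tail (conv_pow \<mu> n) x - 1\<bar> \<le> \<epsilon>"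
proof -
  have tail_pos: "0 < tail (conv_pow \<mu> n) x" for x using S by (simp add: class_S_def class_L_def)
  have "0 < \<epsilon> / (real n)\<^sup>2" using \<epsilon> n by simp
  from J2_J3_negligible[OF \<mu> n S this] eventually_ge_at_top[of 0]
  show ?thesis
  proof eventually_elim
    case (elim A)
    note A = \<open>0 \<le> A\<close>
    from elim(1) eventually_gt_at_top[of "real n * A"] show ?case
    proof eventually_elim
      case (elim x)
      let ?t = "tail (conv_pow \<mu> n) x"
      have "2 * A \<le> real n * A" using n A by (intro mult_right_mono) auto
      with elim(2) have x: "2 * A \<le> x" by linarith
      have "\<bar>real n * J1 \<mu> n A x - ?t\<bar> \<le> (real n)\<^sup>2 * (J2 \<mu> n A x + J3 \<mu> A x)"
        using tail_conv_pow_le_J1_J2[OF \<mu> n A elim(2)] J1_J2_le_tail_conv_pow[OF \<mu> n A elim(2)] n x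
        by (intro abs_diff_le_of_J_bounds)
          (simp_all add: J2_eq_measure[OF \<mu> n] J3_eq_measure[OF \<mu>] field_simps)
      also have "\<dots> \<le> \<epsilon> * ?t"
        using elim(1) n by (simp add: field_simps)
      finally have "\<bar>real n * J1 \<mu> n A x - ?t\<bar> / ?t \<le> \<epsilon>"
        using tail_pos[of x] by (simp add: divide_le_eq)
      moreover have "real n * J1 \<mu> n A x / ?t - 1 = (real n * J1 \<mu> n A x - ?t) / ?t"
        using tail_pos[of x] by (simp add: field_simps)
      ultimately show ?case
        using tail_pos[of x] by (simp add: abs_divide)
    qed
  qed
qed

theorem lemma4p1:
  fixes \<mu> :: "real measure" and \<gamma> :: real and n :: nat
  assumes "\<gamma> > 0" and "n \<ge> 2"
    and "real_distribution \<mu>"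
    and "\<forall>x. tail \<mu> x > 0"
  shows "(\<forall>A x. A > 0 \<longrightarrow> x > real n * A \<longrightarrow>
            tail (conv_pow \<mu> n) x \<le> real n * J1 \<mu> n A x + real n * J2 \<mu> n A x \<and>
            real n * J1 \<mu> n A x - real n * (real n - 3) / 2 * J2 \<mu> n A x
              - real n * (real n - 1) / 2 * J3 \<mu> A x \<le> tail (conv_pow \<mu> n) x)
    \<and> (class_S \<gamma> (conv_pow \<mu> n) \<longrightarrow>
         ((\<lambda>A. eps \<mu> n A) \<longlongrightarrow> 0) at_top \<and>
         ((\<lambda>A. Liminf at_top (\<lambda>x. ereal (real n * J1 \<mu> n A x / tail (conv_pow \<mu> n) x)))
            \<longlongrightarrow> 1) at_top \<and>
         ((\<lambda>A. Limsup at_top (\<lambda>x. ereal (real n * J1 \<mu> n A x / tail (conv_pow \<mu> n) x)))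
            \<longlongrightarrow> 1) at_top)"
proof -
  have \<mu>: "real_distribution \<mu>" and n: "2 \<le> n" using assms by simp_all
  have part_i: "tail (conv_pow \<mu> n) x \<le> real n * J1 \<mu> n A x + real n * J2 \<mu> n A x \<and>
      real n * J1 \<mu> n A x - real n * (real n - 3) / 2 * J2 \<mu> n A x
        - real n * (real n - 1) / 2 * J3 \<mu> A x \<le> tail (conv_pow \<mu> n) x"
    if "0 < A" "real n * A < x" for A x
    using tail_conv_pow_le_J1_J2[OF \<mu> n _ that(2)] J1_J2_le_tail_conv_pow[OF \<mu> n _ that(2)] that(1)
    by (simp add: field_simps)
  have part_ii:
    "((\<lambda>A. Liminf at_top (\<lambda>x. ereal (real n * J1 \<mu> n A x / tail (conv_pow \<mu> n) x))) \<longlongrightarrow> 1) at_top"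
    "((\<lambda>A. Limsup at_top (\<lambda>x. ereal (real n * J1 \<mu> n A x / tail (conv_pow \<mu> n) x))) \<longlongrightarrow> 1) at_top"
    if "class_S \<gamma> (conv_pow \<mu> n)"
    using Limsup_Liminf_tendsto_of_uniform[OF J1_ratio_uniformly_close[OF \<mu> n that]]
    by (simp_all add: one_ereal_def)
  show ?thesis
    using part_i part_ii eps_tendsto_zero[OF \<mu> n] by blast
qed

end
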